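(* Let $\Omega$ be a domain in $\mathbb R^n$, $n\ge3$, and let $(f,\Gamma)$ satisfy the standing structural assumptions. Assume that $0<v\in USC(\Omega)$ is a viscosity sub-solution of $f(\lambda(-A^u))=1$ in $\Omega$. Then for all $x\in\Omega$, $$\mathrm{dist}(x,\partial\Omega)^{\frac{n-2}{2}}v(x)\le\alpha,$$ where $\alpha=\alpha(f)$ is the constant of the canonical solutions.
   Context: Let $n\ge3$. For a positive $C^2$ function $u$, its conformal Hessian is $A^u=-\frac{2}{n-2}u^{-\frac{n+2}{n-2}}\nabla^2u+\frac{2n}{(n-2)^2}u^{-\frac{2n}{n-2}}\nabla u\otimes\nabla u-\frac{2}{(n-2)^2}u^{-\frac{2n}{n-2}}|\nabla u|^2I$, and $\lambda(-A^u)$ is the vector of eigenvalues of $-A^u$. Let $\Gamma_n=\{\mu:\mu_i>0\ \forall i\}$. Standing structural assumptions on $(f,\Gamma)$: $\Gamma\subset\mathbb R^n$ is an open symmetric cone with vertex at the origin, $\Gamma+\Gamma_n\subset\Gamma$; $f\in C^0(\bar\Gamma)$ symmetric, $f>0$ in $\Gamma$, $f=0$ on $\partial\Gamma$, $f(\lambda+\mu)\ge f(\lambda)$ for $\lambda\in\Gamma,\mu\in\Gamma_n$, $f$ homogeneous of some positive degree. Viscosity sub-solution: $v\in USC(\Omega)$ (upper semicontinuous, values in $\mathbb R\cup\{-\infty\}$) such that for every $x_0\in\Omega$, $\varphi\in C^2(\Omega)$ with $(v-\varphi)(x_0)=0$, $v-\varphi\le0$ near $x_0$, one has $\lambda(-A^\varphi(x_0))\in\bar\Gamma$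 and $f(\lambda(-A^\varphi(x_0)))\ge1$. Canonical solutions: there is a unique constant $\alpha=\alpha(f)>0$ such that for all $R>0$, $x_0\in\mathbb R^n$ the functions $u^{(in)}_{R,x_0}(x)=\alpha\big(\frac{R}{R^2-|x-x_0|^2}\big)^{\frac{n-2}{2}}$ and $u^{(out)}_{R,x_0}(x)=\alpha\big(\frac{R}{|x-x_0|^2-R^2}\big)^{\frac{n-2}{2}}$ satisfy $f(\lambda(-A^{u}))=1$ in $B_R(x_0)$ and in $\mathbb R^n\setminus\bar B_R(x_0)$ respectively. *)

theory Defs
  imports "HOL-Analysis.Analysis"
begin

text \<open>Points of R^n are vectors real^'n; the dimension is n = CARD('n).\<close>

definition usc_on :: "('a::metric_space) set \<Rightarrow> ('a \<Rightarrow> real) \<Rightarrow> bool" where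
  "usc_on S v \<longleftrightarrow> (\<forall>x\<in>S. \<forall>c. v x < c \<longrightarrow>
      (\<exists>d>0. \<forall>y\<in>S. dist y x < d \<longrightarrow> v y < c))"

definition C2_with :: "(real^'n) set \<Rightarrow> (real^'n \<Rightarrow> real) \<Rightarrow> (real^'n \<Rightarrow> real^'n)
     \<Rightarrow> (real^'n \<Rightarrow> real^'n^'n) \<Rightarrow> bool" where
  "C2_with U u Du Hu \<longleftrightarrow>
     (\<forall>x\<in>U. (u has_derivative (\<lambda>h. Du x \<bullet> h)) (at x)) \<and>
     (\<forall>x\<in>U. (Du has_derivative (\<lambda>h. Hu x *v h)) (at x)) \<and>
     continuous_on U Du \<and> continuous_on U Hu"

definition outer :: "real^'n \<Rightarrow> real^'n \<Rightarrow> real^'n^'n" where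
  "outer a b = (\<chi> i j. a$i * b$j)"

text \<open>Conformal Hessian A^u at a point, given u(x) = p > 0, gradient g, Hessian H.\<close>
definition conf_hess :: "real \<Rightarrow> real^'n \<Rightarrow> real^'n^'n \<Rightarrow> real^'n^'n" where
  "conf_hess p g H = (let n = real CARD('n) in
      (- (2 / (n - 2)) * p powr (- (n + 2) / (n - 2))) *\<^sub>R H
    + ((2 * n / (n - 2)^2) * p powr (- 2 * n / (n - 2))) *\<^sub>R outer g g
    - ((2 / (n - 2)^2) * p powr (- 2 * n / (n - 2)) * (norm g)^2) *\<^sub>R mat 1)"

text \<open>lam is a vector of the eigenvalues of M, counted with (algebraic) multiplicity,
  i.e. det(t I - M) = prod_i (t - lam_i).  For symmetric M this is lambda(M) up to order.\<close>
definition eigvec_of :: "real^'n^'n \<Rightarrow> real^'n \<Rightarrow> bool" where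
  "eigvec_of M lam \<longleftrightarrow> (\<forall>t. det (mat t - M) = (\<Prod>i\<in>UNIV. t - lam$i))"

definition pos_cone :: "(real^'n) set" where
  "pos_cone = {mu. \<forall>i. mu$i > 0}"

definition permute_vec :: "('n \<Rightarrow> 'n) \<Rightarrow> real^'n \<Rightarrow> real^'n" where
  "permute_vec s x = (\<chi> i. x $ (s i))"

definition structural :: "(real^'n \<Rightarrow> real) \<Rightarrow> (real^'n) set \<Rightarrow> bool" where
  "structural f G \<longleftrightarrow>
     G \<noteq> {} \<and> open G \<and> (\<forall>t>0. \<forall>x\<in>G. t *\<^sub>R x \<in> G) \<and>
     (\<forall>s x. s permutes (UNIV::'n set) \<longrightarrow> x \<in> G \<longrightarrow> permute_vec s x \<in> G) \<and>
     (\<forall>x\<in>G. \<forall>mu\<in>pos_cone. x + mu \<in> G) \<and>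
     continuous_on (closure G) f \<and>
     (\<forall>s x. s permutes (UNIV::'n set) \<longrightarrow> x \<in> closure G \<longrightarrow> f (permute_vec s x) = f x) \<and>
     (\<forall>x\<in>G. f x > 0) \<and> (\<forall>x\<in>frontier G. f x = 0) \<and>
     (\<forall>x\<in>G. \<forall>mu\<in>pos_cone. f (x + mu) \<ge> f x) \<and>
     (\<exists>d>0. \<forall>x\<in>G. \<forall>t>0. f (t *\<^sub>R x) = t powr d * f x)"

definition classical_solution :: "(real^'n \<Rightarrow> real) \<Rightarrow> (real^'n) set \<Rightarrow> (real^'n) set
     \<Rightarrow> (real^'n \<Rightarrow> real) \<Rightarrow> bool" where
  "classical_solution f G U u \<longleftrightarrow> (\<forall>x\<in>U. u x > 0) \<and>
     (\<exists>Du Hu. C2_with U u Du Hu \<and>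
        (\<forall>x\<in>U. \<forall>lam. eigvec_of (- conf_hess (u x) (Du x) (Hu x)) lam
                 \<longrightarrow> lam \<in> closure G \<and> f lam = 1))"

definition visc_subsol :: "(real^'n \<Rightarrow> real) \<Rightarrow> (real^'n) set \<Rightarrow> (real^'n) set
     \<Rightarrow> (real^'n \<Rightarrow> real) \<Rightarrow> bool" where
  "visc_subsol f G \<Omega> v \<longleftrightarrow> usc_on \<Omega> v \<and>
     (\<forall>x0\<in>\<Omega>. \<forall>phi Dphi Hphi. C2_with \<Omega> phi Dphi Hphi \<longrightarrow> v x0 = phi x0 \<longrightarrow>
        (\<exists>r>0. \<forall>y\<in>\<Omega>. dist y x0 < r \<longrightarrow> v y \<le> phi y) \<longrightarrow>
        (\<forall>lam. eigvec_of (- conf_hess (phi x0) (Dphi x0) (Hphi x0)) lam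
                 \<longrightarrow> lam \<in> closure G \<and> f lam \<ge> 1))"

definition u_in :: "real \<Rightarrow> real \<Rightarrow> real^'n \<Rightarrow> real^'n \<Rightarrow> real" where
  "u_in a R x0 x = a * (R / (R^2 - (norm (x - x0))^2)) powr ((real CARD('n) - 2) / 2)"

definition u_out :: "real \<Rightarrow> real \<Rightarrow> real^'n \<Rightarrow> real^'n \<Rightarrow> real" where
  "u_out a R x0 x = a * (R / ((norm (x - x0))^2 - R^2)) powr ((real CARD('n) - 2) / 2)"

definition canonical_const :: "(real^'n \<Rightarrow> real) \<Rightarrow> (real^'n) set \<Rightarrow> real \<Rightarrow> bool" where
  "canonical_const f G a \<longleftrightarrow> a > 0 \<and>
     (\<forall>R>0. \<forall>x0::real^'n.
        classical_solution f G (ball x0 R) (u_in a R x0) \<and>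
        classical_solution f G (- cball x0 R) (u_out a R x0))"

end

theory Submission
  imports Defs
begin

text \<open>
  Let \<open>cball x r \<subseteq> \<Omega>\<close> and compare \<open>v\<close> with the canonical solution \<open>u = u_in \<alpha> r x\<close>.
  Since \<open>u\<close> blows up on the sphere, \<open>v / u\<close> attains its maximum \<open>m\<close> over the ball at an interior
  point, where \<open>m * u\<close> touches \<open>v\<close> from above. The eigenvalue vector of the canonical solution is
  a constant vector \<open>\<lambda>\<close> with \<open>f \<lambda> = 1\<close>, and that of \<open>m * u\<close> is \<open>m powr (- 4 / (n - 2)) *\<^sub>R \<lambda>\<close>;
  testing the sub-solution property with (a \<open>C\<^sup>2\<close> extension of) \<open>m * u\<close> and using homogeneity
  of \<open>f\<close> gives \<open>m \<le> 1\<close>. Hence \<open>v x \<le> u x = \<alpha> * r powr (- (n - 2) / 2)\<close> for every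
  \<open>r < dist(x, \<partial>\<Omega>)\<close>, which is the bound, and for \<open>\<Omega> = UNIV\<close> letting \<open>r \<rightarrow> \<infinity>\<close> is absurd.
\<close>

section \<open>C^2 functions on the real line and radial functions on R^n\<close>

lemma has_real_derivative_glue:
  fixes f p :: "real \<Rightarrow> real"
  assumes "t1 < b"
    and f: "\<And>t. t < b \<Longrightarrow> (f has_real_derivative f' t) (at t)"
    and p: "\<And>t. (p has_real_derivative p' t) (at t)"
    and "f t1 = p t1" "f' t1 = p' t1"
  shows "((\<lambda>t. if t \<le> t1 then f t else p t) has_real_derivative
           (if t \<le> t1 then f' t else p' t)) (at t)"
proof -
  let ?g = "\<lambda>t. if t \<le> t1 then f t else p t"
  consider "t < t1" | "t = t1" | "t1 < t" by linarith
  then show ?thesis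
  proof cases
    case 1
    have "(f has_real_derivative f' t) (at t)" using f 1 \<open>t1 < b\<close> by simp
    then have "(?g has_real_derivative f' t) (at t)"
      unfolding has_field_derivative_def
      by (rule has_derivative_transform_within_open[where s="{..<t1}"]) (use 1 in auto)
    with 1 show ?thesis by simp
  next
    case 2
    have "((\<lambda>y. (?g y - ?g t1) / (y - t1)) \<longlongrightarrow> f' t1) (at t1 within {..t1})"
      using has_field_derivative_at_within[OF f[OF \<open>t1 < b\<close>]] unfolding has_field_derivative_iff
      by (rule Lim_transform_within[where d=1]) auto
    moreover have "((\<lambda>y. (?g y - ?g t1) / (y - t1)) \<longlongrightarrow> f' t1) (at t1 within {t1..})"
      unfolding \<open>f' t1 = p' t1\<close>
      using has_field_derivative_at_within[OF p[of t1]] unfolding has_field_derivative_iff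
      by (rule Lim_transform_within[where d=1]) (use \<open>f t1 = p t1\<close> in auto)
    ultimately have "((\<lambda>y. (?g y - ?g t1) / (y - t1)) \<longlongrightarrow> f' t1) (at t1 within {..t1} \<union> {t1..})"
      by (simp add: Lim_within_Un)
    moreover have "{..t1} \<union> {t1..} = UNIV" by auto
    ultimately show ?thesis using 2 by (simp add: has_field_derivative_iff)
  next
    case 3
    have "(?g has_real_derivative p' t) (at t)"
      using p[of t] unfolding has_field_derivative_def
      by (rule has_derivative_transform_within_open[where s="{t1<..}"]) (use 3 in auto)
    with 3 show ?thesis by simp
  qed
qed

lemma C2_extension_by_Taylor_polynomial:
  fixes g g1 g2 :: "real \<Rightarrow> real"
  assumes "t1 < b"
    and d1: "\<And>t. t < b \<Longrightarrow> (g has_real_derivative g1 t) (at t)"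
    and d2: "\<And>t. t < b \<Longrightarrow> (g1 has_real_derivative g2 t) (at t)"
    and "continuous_on {..<b} g2"
  obtains G G1 G2 where "\<And>t. (G has_real_derivative G1 t) (at t)"
    "\<And>t. (G1 has_real_derivative G2 t) (at t)" "continuous_on UNIV G2"
    "\<And>t. t \<le> t1 \<Longrightarrow> G t = g t \<and> G1 t = g1 t \<and> G2 t = g2 t"
proof
  let ?G = "\<lambda>t. if t \<le> t1 then g t else g t1 + g1 t1 * (t - t1) + g2 t1 / 2 * (t - t1)^2"
  let ?G1 = "\<lambda>t. if t \<le> t1 then g1 t else g1 t1 + g2 t1 * (t - t1)"
  let ?G2 = "\<lambda>t. if t \<le> t1 then g2 t else g2 t1"
  show "(?G has_real_derivative ?G1 t) (at t)" for t
    by (rule has_real_derivative_glue[OF \<open>t1 < b\<close> d1])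
      (auto intro!: derivative_eq_intros simp: field_simps)
  show "(?G1 has_real_derivative ?G2 t) (at t)" for t
    by (rule has_real_derivative_glue[OF \<open>t1 < b\<close> d2]) (auto intro!: derivative_eq_intros)
  have "continuous_on UNIV (\<lambda>t. g2 (min t t1))"
    by (rule continuous_on_compose2[OF assms(4)]) (use assms(1) in \<open>auto intro!: continuous_intros\<close>)
  moreover have "?G2 = (\<lambda>t. g2 (min t t1))" by (auto simp: min_def)
  ultimately show "continuous_on UNIV ?G2" by (simp only:)
qed auto

lemma outer_mult_vec: "outer a b *v h = (b \<bullet> h) *\<^sub>R a"
  by (simp add: outer_def matrix_vector_mult_def vec_eq_iff inner_vec_def sum_distrib_left
      mult.commute mult.left_commute)

lemma continuous_on_outer [continuous_intros]:
  "continuous_on S a \<Longrightarrow> continuous_on S b \<Longrightarrow> continuous_on S (\<lambda>y. outer (a y) (b y))"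
  unfolding outer_def by (intro continuous_intros continuous_on_vec_lambda)

lemma C2_with_subset: "C2_with U u Du Hu \<Longrightarrow> V \<subseteq> U \<Longrightarrow> C2_with V u Du Hu"
  unfolding C2_with_def by (auto intro: continuous_on_subset)

lemma C2_with_unique:
  assumes "C2_with N u Du Hu" "C2_with N \<psi> D\<psi> H\<psi>" "open N"
    and "\<And>z. z \<in> N \<Longrightarrow> u z = \<psi> z" "y \<in> N"
  shows "Du y = D\<psi> y \<and> Hu y = H\<psi> y"
proof -
  have D: "Du z = D\<psi> z" if "z \<in> N" for z
  proof -
    have "(u has_derivative (\<lambda>h. Du z \<bullet> h)) (at z)"
      using assms(1) that unfolding C2_with_def by auto
    then have "(\<psi> has_derivative (\<lambda>h. Du z \<bullet> h)) (at z)"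
      by (rule has_derivative_transform_within_open[OF _ \<open>open N\<close> that]) (use assms(4) in auto)
    moreover have "(\<psi> has_derivative (\<lambda>h. D\<psi> z \<bullet> h)) (at z)"
      using assms(2) that unfolding C2_with_def by auto
    ultimately have "(\<lambda>h. Du z \<bullet> h) = (\<lambda>h. D\<psi> z \<bullet> h)" by (rule has_derivative_unique)
    then show ?thesis by (metis vector_eq_rdot)
  qed
  have "(Du has_derivative (\<lambda>h. Hu y *v h)) (at y)"
    using assms(1,5) unfolding C2_with_def by auto
  then have "(D\<psi> has_derivative (\<lambda>h. Hu y *v h)) (at y)"
    by (rule has_derivative_transform_within_open[OF _ \<open>open N\<close> \<open>y \<in> N\<close>]) (use D in auto)
  moreover have "(D\<psi> has_derivative (\<lambda>h. H\<psi> y *v h)) (at y)"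
    using assms(2,5) unfolding C2_with_def by auto
  ultimately have "(\<lambda>h. Hu y *v h) = (\<lambda>h. H\<psi> y *v h)" by (rule has_derivative_unique)
  then show ?thesis using D assms(5) by (metis matrix_eq)
qed

lemma C2_with_radial:
  fixes x :: "real^'n" and G G1 G2 :: "real \<Rightarrow> real"
  assumes d1: "\<And>t. (G has_real_derivative G1 t) (at t)"
    and d2: "\<And>t. (G1 has_real_derivative G2 t) (at t)"
    and c2: "continuous_on UNIV G2"
  shows "C2_with U (\<lambda>y. G (norm (y - x)^2)) (\<lambda>y. (2 * G1 (norm (y - x)^2)) *\<^sub>R (y - x))
     (\<lambda>y. (4 * G2 (norm (y - x)^2)) *\<^sub>R outer (y - x) (y - x) + (2 * G1 (norm (y - x)^2)) *\<^sub>R mat 1)"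
proof -
  have sq: "((\<lambda>y. norm (y - x)^2) has_derivative (\<lambda>h. 2 * ((y - x) \<bullet> h))) (at y)" for y
  proof -
    have "((\<lambda>y. (y - x) \<bullet> (y - x)) has_derivative (\<lambda>h. (y - x) \<bullet> h + h \<bullet> (y - x))) (at y)"
      by (auto intro!: derivative_eq_intros)
    then show ?thesis by (simp add: power2_norm_eq_inner inner_commute)
  qed
  have G: "((\<lambda>y. G (norm (y - x)^2)) has_derivative (\<lambda>h. G1 (norm (y - x)^2) * (2 * ((y - x) \<bullet> h)))) (at y)"
    for y using has_derivative_compose[OF sq d1[unfolded has_field_derivative_def]] by (simp add: o_def)
  have G1: "((\<lambda>y. G1 (norm (y - x)^2)) has_derivative (\<lambda>h. G2 (norm (y - x)^2) * (2 * ((y - x) \<bullet> h)))) (at y)"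
    for y using has_derivative_compose[OF sq d2[unfolded has_field_derivative_def]] by (simp add: o_def)
  have c1: "continuous_on UNIV G1"
    using d2 by (meson DERIV_continuous continuous_at_imp_continuous_on)
  have D1: "((\<lambda>y. G (norm (y - x)^2)) has_derivative
      (\<lambda>h. ((2 * G1 (norm (y - x)^2)) *\<^sub>R (y - x)) \<bullet> h)) (at y)" for y
    using G[of y] by (simp add: algebra_simps)
  have D2: "((\<lambda>y. (2 * G1 (norm (y - x)^2)) *\<^sub>R (y - x)) has_derivative
      (\<lambda>h. ((4 * G2 (norm (y - x)^2)) *\<^sub>R outer (y - x) (y - x) + (2 * G1 (norm (y - x)^2)) *\<^sub>R mat 1) *v h))
      (at y)" for y
    by (auto intro!: derivative_eq_intros G1
        simp: matrix_vector_mult_add_rdistrib outer_mult_vec scaleR_matrix_vector_assoc[symmetric])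
  show ?thesis
    unfolding C2_with_def
    by (intro conjI ballI D1 D2)
      (auto intro!: continuous_intros continuous_on_compose2[OF c1] continuous_on_compose2[OF c2])
qed

section \<open>The conformal Hessian of the canonical solutions\<close>

lemma conf_hess_radial:
  fixes z :: "real^'n"
  assumes "CARD('n) \<ge> 3" and "p > 0" and "q > 0"
  defines "k \<equiv> (real CARD('n) - 2) / 2"
  shows "conf_hess p ((2 * (k * p / q)) *\<^sub>R z)
           ((4 * (k * (k + 1) * p / q^2)) *\<^sub>R outer z z + (2 * (k * p / q)) *\<^sub>R mat 1)
         = (- 2 * p powr (- 2 / k) * (q + (norm z)^2) / q^2) *\<^sub>R mat 1"
proof -
  define n where "n = real CARD('n)"
  define P where "P = p powr (- 2 / k)"
  have "k > 0" using assms(1) unfolding k_def by auto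
  have nk: "n = 2 * k + 2" unfolding n_def k_def by (simp add: field_simps)
  have e1: "p powr (- (n + 2) / (n - 2)) = P / p"
  proof -
    have "- (n + 2) / (n - 2) = - 2 / k - 1" using \<open>k > 0\<close> by (simp add: nk field_simps)
    then show ?thesis using \<open>p > 0\<close> by (simp add: P_def powr_diff)
  qed
  have e2: "p powr (- 2 * n / (n - 2)) = P / p^2"
  proof -
    have "- 2 * n / (n - 2) = - 2 / k - 2" using \<open>k > 0\<close> by (simp add: nk field_simps)
    then show ?thesis using \<open>p > 0\<close> by (simp add: P_def powr_diff)
  qed
  have "(norm ((2 * (k * p / q)) *\<^sub>R z))^2 = (2 * (k * p / q))^2 * (norm z)^2"
    by (simp add: power_mult_distrib power_divide power2_abs)
  then show ?thesis
    unfolding conf_hess_def Let_def n_def[symmetric] e1 e2 P_def[symmetric]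
    using \<open>k > 0\<close> \<open>p > 0\<close> \<open>q > 0\<close>
    by (simp add: vec_eq_iff outer_def mat_def nk field_simps power2_eq_square)
qed

lemma conf_hess_canonical_profile:
  fixes z :: "real^'n"
  assumes n3: "CARD('n) \<ge> 3" and "c > 0" "\<alpha> > 0" "r > 0" "q > 0" and qz: "q + (norm z)^2 = r^2"
  defines "k \<equiv> (real CARD('n) - 2) / 2"
  defines "p \<equiv> c * \<alpha> * r powr k * q powr (- k)"
  shows "conf_hess p ((2 * (k * p / q)) *\<^sub>R z)
           ((4 * (k * (k + 1) * p / q^2)) *\<^sub>R outer z z + (2 * (k * p / q)) *\<^sub>R mat 1)
         = (- 2 * (c * \<alpha>) powr (- 4 / (real CARD('n) - 2))) *\<^sub>R mat 1"
proof -
  have "k > 0" using n3 unfolding k_def by auto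
  have "p > 0" using assms(2-5) by (simp add: p_def)
  have "p powr (- 2 / k) = (c * \<alpha>) powr (- 2 / k) * r powr (- 2) * q powr 2"
    using \<open>k > 0\<close> assms(2-5) by (simp add: p_def powr_mult powr_powr)
  also have "\<dots> = (c * \<alpha>) powr (- 2 / k) * q^2 / r^2"
    using \<open>q > 0\<close> \<open>r > 0\<close> by (simp add: powr_minus divide_inverse)
  finally have "- 2 * p powr (- 2 / k) * (q + (norm z)^2) / q^2 = - 2 * (c * \<alpha>) powr (- 2 / k)"
    using qz \<open>q > 0\<close> \<open>r > 0\<close> by simp
  also have "- 2 / k = - 4 / (real CARD('n) - 2)" by (simp add: k_def)
  finally show ?thesis
    using conf_hess_radial[OF n3 \<open>p > 0\<close> \<open>q > 0\<close>, of z] unfolding k_def by simp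
qed

text \<open>Test functions must be \<open>C\<^sup>2\<close> on the whole domain, so the radial profile of the canonical
  solution, which blows up at \<open>norm (y - x)\<^sup>2 = r\<^sup>2\<close>, is continued beyond \<open>t1\<close> by its Taylor polynomial.\<close>

lemma canonical_profile_C2_extension:
  fixes x :: "real^'n"
  assumes n3: "CARD('n) \<ge> 3" and "r > 0" "c > 0" "\<alpha> > 0" and t1: "t1 < r^2"
  obtains \<phi> D\<phi> H\<phi> where "C2_with UNIV \<phi> D\<phi> H\<phi>"
    "\<And>y. norm (y - x)^2 < t1 \<Longrightarrow> \<phi> y = c * u_in \<alpha> r x y"
    "\<And>y. norm (y - x)^2 < t1 \<Longrightarrow> conf_hess (\<phi> y) (D\<phi> y) (H\<phi> y)
        = (- 2 * (c * \<alpha>) powr (- 4 / (real CARD('n) - 2))) *\<^sub>R mat 1"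
proof -
  define k where "k = (real CARD('n) - 2) / 2"
  define a where "a = c * \<alpha> * r powr k"
  define g where "g t = a * (r^2 - t) powr (- k)" for t
  define g1 where "g1 t = k * a * (r^2 - t) powr (- k - 1)" for t
  define g2 where "g2 t = k * (k + 1) * a * (r^2 - t) powr (- k - 2)" for t
  have dg: "(g has_real_derivative g1 t) (at t)" and dg1: "(g1 has_real_derivative g2 t) (at t)"
    if "t < r^2" for t
    using that unfolding g_def g1_def g2_def by (auto intro!: derivative_eq_intros simp: algebra_simps)
  have "continuous_on {..<r^2} g2"
    unfolding g2_def by (auto intro!: continuous_intros)
  then obtain G G1 G2
    where G: "\<And>t. (G has_real_derivative G1 t) (at t)" "\<And>t. (G1 has_real_derivative G2 t) (at t)"
      "continuous_on UNIV G2" and Gg: "\<And>t. t \<le> t1 \<Longrightarrow> G t = g t \<and> G1 t = g1 t \<and> G2 t = g2 t"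
    using C2_extension_by_Taylor_polynomial[OF t1 dg dg1] by blast
  show thesis
  proof
    show "C2_with UNIV (\<lambda>y. G (norm (y - x)^2)) (\<lambda>y. (2 * G1 (norm (y - x)^2)) *\<^sub>R (y - x))
     (\<lambda>y. (4 * G2 (norm (y - x)^2)) *\<^sub>R outer (y - x) (y - x) + (2 * G1 (norm (y - x)^2)) *\<^sub>R mat 1)"
      by (rule C2_with_radial[OF G])
  next
    fix y :: "real^'n"
    assume y: "norm (y - x)^2 < t1"
    define q where "q = r^2 - norm (y - x)^2"
    define p where "p = c * \<alpha> * r powr k * q powr (- k)"
    have "q > 0" using y t1 by (simp add: q_def)
    have Gy: "G (norm (y - x)^2) = p" "G1 (norm (y - x)^2) = k * p / q"
      "G2 (norm (y - x)^2) = k * (k + 1) * p / q^2"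
      using Gg[of "norm (y - x)^2"] y \<open>q > 0\<close>
      by (simp_all add: g_def g1_def g2_def p_def a_def q_def[symmetric] powr_diff powr_numeral)
    then show "G (norm (y - x)^2) = c * u_in \<alpha> r x y"
      using \<open>r > 0\<close> \<open>q > 0\<close> by (simp add: u_in_def p_def k_def q_def powr_divide powr_minus_divide)
    have "q + (norm (y - x))^2 = r^2" by (simp add: q_def)
    from conf_hess_canonical_profile[OF n3 \<open>c > 0\<close> \<open>\<alpha> > 0\<close> \<open>r > 0\<close> \<open>q > 0\<close> this]
    show "conf_hess (G (norm (y - x)^2)) ((2 * G1 (norm (y - x)^2)) *\<^sub>R (y - x))
        ((4 * G2 (norm (y - x)^2)) *\<^sub>R outer (y - x) (y - x) + (2 * G1 (norm (y - x)^2)) *\<^sub>R mat 1)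
      = (- 2 * (c * \<alpha>) powr (- 4 / (real CARD('n) - 2))) *\<^sub>R mat 1"
      unfolding Gy p_def k_def .
  qed
qed

lemma uminus_mat: "- (mat c :: real^'n^'n) = mat (- c)"
  by (simp add: vec_eq_iff mat_def)

lemma scaleR_mat_1: "c *\<^sub>R (mat 1 :: real^'n^'n) = mat c"
  by (simp add: vec_eq_iff mat_def)

lemma eigvec_of_mat: "eigvec_of (mat \<kappa> :: real^'n^'n) (vec \<kappa> :: real^'n)"
  unfolding eigvec_of_def
proof
  fix t
  have "det (mat t - mat \<kappa> :: real^'n^'n) = (\<Prod>i\<in>UNIV. (mat t - mat \<kappa> :: real^'n^'n) $ i $ i)"
    by (rule det_diagonal) (simp add: mat_def)
  then show "det (mat t - mat \<kappa> :: real^'n^'n) = (\<Prod>i\<in>UNIV. t - (vec \<kappa> :: real^'n) $ i)"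
    by (simp add: mat_def)
qed

lemma canonical_const_eigenvalue:
  fixes f :: "real^'n \<Rightarrow> real"
  assumes n3: "CARD('n) \<ge> 3" and "structural f G" and "canonical_const f G \<alpha>"
  defines "\<kappa> \<equiv> 2 * \<alpha> powr (- 4 / (real CARD('n) - 2))"
  shows "vec \<kappa> \<in> G" "f (vec \<kappa>) = 1"
proof -
  let ?u = "u_in \<alpha> 1 (0 :: real^'n)"
  have "\<alpha> > 0" and "classical_solution f G (ball 0 1) ?u"
    using assms(3) unfolding canonical_const_def by auto
  then obtain Du Hu where C2u: "C2_with (ball 0 1) ?u Du Hu"
    and sol: "\<forall>y\<in>ball 0 1. \<forall>lam. eigvec_of (- conf_hess (?u y) (Du y) (Hu y)) lam
                 \<longrightarrow> lam \<in> closure G \<and> f lam = 1"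
    unfolding classical_solution_def by blast
  have "1/2 < (1::real)^2" by simp
  obtain \<psi> D\<psi> H\<psi> where C2\<psi>: "C2_with UNIV \<psi> D\<psi> H\<psi>"
    and \<psi>: "\<And>y. norm (y - 0)^2 < 1/2 \<Longrightarrow> \<psi> y = 1 * ?u y"
    and \<psi>_hess: "\<And>y. norm (y - 0)^2 < 1/2 \<Longrightarrow> conf_hess (\<psi> y) (D\<psi> y) (H\<psi> y)
        = (- 2 * (1 * \<alpha>) powr (- 4 / (real CARD('n) - 2))) *\<^sub>R mat 1"
    using canonical_profile_C2_extension[OF n3 zero_less_one zero_less_one \<open>\<alpha> > 0\<close> \<open>1/2 < 1^2\<close>,
        of 0]
    by blast
  define N :: "(real^'n) set" where "N = {y. norm (y - 0)^2 < 1/2}"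
  have "open N" unfolding N_def by (intro open_Collect_less continuous_intros)
  have "0 \<in> N" by (simp add: N_def)
  have "N \<subseteq> ball 0 1"
  proof
    fix y assume "y \<in> N"
    then have "norm y ^ 2 < 1 ^ 2" by (simp add: N_def)
    then show "y \<in> ball 0 1" using power2_less_imp_less[of "norm y" 1] by simp
  qed
  \<comment> \<open>The solution property only provides \<open>some\<close> derivatives \<open>Du\<close>, \<open>Hu\<close>; they are identified
    with those of the explicit profile by uniqueness of derivatives.\<close>
  have uni: "Du 0 = D\<psi> 0 \<and> Hu 0 = H\<psi> 0"
    using C2_with_unique[OF C2_with_subset[OF C2u \<open>N \<subseteq> ball 0 1\<close>] C2_with_subset[OF C2\<psi> subset_UNIV]
        \<open>open N\<close> _ \<open>0 \<in> N\<close>] \<psi>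
    by (simp add: N_def)
  have "conf_hess (?u 0) (Du 0) (Hu 0) = conf_hess (\<psi> 0) (D\<psi> 0) (H\<psi> 0)"
    using uni \<psi>[of 0] by simp
  also have "\<dots> = mat (- \<kappa>)"
    using \<psi>_hess[of 0] by (simp add: \<kappa>_def scaleR_mat_1)
  finally have "- conf_hess (?u 0) (Du 0) (Hu 0) = mat \<kappa>"
    by (simp add: uminus_mat)
  then have "eigvec_of (- conf_hess (?u 0) (Du 0) (Hu 0)) (vec \<kappa>)"
    by (simp add: eigvec_of_mat)
  then have "vec \<kappa> \<in> closure G \<and> f (vec \<kappa>) = 1"
    using sol \<open>0 \<in> N\<close> \<open>N \<subseteq> ball 0 1\<close> by blast
  then show "vec \<kappa> \<in> G" "f (vec \<kappa>) = 1"
    using assms(2) unfolding structural_def closure_Un_frontier by auto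
qed

lemma structural_scale_ge_one:
  assumes "structural f G" "lam \<in> G" "f lam = 1" "s > 0" "1 \<le> f (s *\<^sub>R lam)"
  shows "1 \<le> s"
proof -
  obtain d where "d > 0" and "f (s *\<^sub>R lam) = s powr d * f lam"
    using assms(1,2,4) unfolding structural_def by blast
  then have "1 \<le> s powr d" using assms(3,5) by simp
  show ?thesis
  proof (rule ccontr)
    assume "\<not> 1 \<le> s"
    then have "s powr d < 1 powr d" using \<open>d > 0\<close> \<open>s > 0\<close> by (intro powr_less_mono2) auto
    with \<open>1 \<le> s powr d\<close> show False by simp
  qed
qed

section \<open>Upper semicontinuity\<close>

lemma usc_on_subset: "usc_on S v \<Longrightarrow> T \<subseteq> S \<Longrightarrow> usc_on T v"
  unfolding usc_on_def by (meson subsetD)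

lemma usc_on_iff_eventually:
  "usc_on S v \<longleftrightarrow> (\<forall>y\<in>S. \<forall>c. v y < c \<longrightarrow> (\<forall>\<^sub>F z in at y within S. v z < c))"
  unfolding usc_on_def eventually_at by metis

lemma usc_on_eventually_less:
  assumes "usc_on S v" "y \<in> S" "(w \<longlongrightarrow> w y) (at y within S)" "v y < w y"
  shows "\<forall>\<^sub>F z in at y within S. v z < w z"
proof -
  define c where "c = (v y + w y) / 2"
  have "v y < c" "c < w y" using assms(4) by (simp_all add: c_def)
  have "\<forall>\<^sub>F z in at y within S. v z < c"
    using assms(1,2) \<open>v y < c\<close> unfolding usc_on_iff_eventually by blast
  moreover have "\<forall>\<^sub>F z in at y within S. c < w z"
    using assms(3) \<open>c < w y\<close> by (rule order_tendstoD)
  ultimately show ?thesis by eventually_elim simp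
qed

lemma usc_on_attains_max:
  fixes h :: "'a::metric_space \<Rightarrow> real"
  assumes "compact K" "K \<noteq> {}" "usc_on K h"
  obtains y where "y \<in> K" "\<And>z. z \<in> K \<Longrightarrow> h z \<le> h y"
proof -
  have "\<exists>y\<in>K. \<forall>z\<in>K. h z \<le> h y"
  proof (rule ccontr)
    assume "\<not> ?thesis"
    then obtain up where up: "\<And>y. y \<in> K \<Longrightarrow> up y \<in> K \<and> h y < h (up y)"
      by (metis not_le)
    then have "\<forall>y\<in>K. \<exists>d>0. \<forall>z\<in>K. dist z y < d \<longrightarrow> h z < h (up y)"
      using assms(3) unfolding usc_on_def by blast
    then obtain d where d: "\<And>y. y \<in> K \<Longrightarrow> d y > 0 \<and> (\<forall>z\<in>K. dist z y < d y \<longrightarrow> h z < h (up y))"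
      by metis
    then have "K \<subseteq> (\<Union>y\<in>K. ball y (d y))" by force
    then obtain F where F: "F \<subseteq> K" "finite F" "K \<subseteq> (\<Union>y\<in>F. ball y (d y))"
      using compactE_image[OF assms(1), of K "\<lambda>y. ball y (d y)"] by blast
    then have "F \<noteq> {}" using assms(2) by auto
    then obtain y1 where "y1 \<in> F" and y1: "Max ((h \<circ> up) ` F) = h (up y1)"
      using obtains_MAX[OF \<open>finite F\<close>] by (metis comp_apply)
    then obtain y2 where "y2 \<in> F" "dist (up y1) y2 < d y2"
      using F up by (force simp: dist_commute)
    then have "h (up y1) < h (up y2)" using d F up \<open>y1 \<in> F\<close> by blast
    moreover have "h (up y2) \<le> h (up y1)"
      using y1 \<open>y2 \<in> F\<close> \<open>finite F\<close> by (metis Max_ge comp_apply finite_imageI imageI)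
    ultimately show False by simp
  qed
  then show thesis using that by blast
qed

lemma u_in_pos:
  assumes "r > 0" "\<alpha> > 0" "y \<in> ball x r"
  shows "u_in \<alpha> r x y > 0"
proof -
  have "norm (y - x) < r" using assms(3) by (simp add: dist_norm norm_minus_commute)
  moreover from this have "norm (y - x)^2 < r^2" by (simp add: power_strict_mono)
  ultimately show ?thesis using assms(1,2) by (simp add: u_in_def zero_less_mult_iff)
qed

lemma continuous_on_u_in: "continuous_on (ball x r) (u_in \<alpha> r x)"
proof -
  have "r^2 \<noteq> norm (y - x)^2" if "norm (y - x) < r" for y
    using that power_strict_mono[of "norm (y - x)" r 2] by simp
  then show ?thesis
    unfolding u_in_def by (intro continuous_intros) (auto simp: dist_norm norm_minus_commute)
qed

lemma u_in_tendsto_at_top_sphere: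
  fixes x y :: "real^'n"
  assumes "CARD('n) \<ge> 3" "r > 0" "\<alpha> > 0" "norm (y - x) = r"
  shows "filterlim (u_in \<alpha> r x) at_top (at y within ball x r)"
proof -
  define k where "k = (real CARD('n) - 2) / 2"
  have "k > 0" using assms(1) unfolding k_def by auto
  define q where "q z = r^2 - norm (z - x)^2" for z
  have "(q \<longlongrightarrow> 0) (at y within ball x r)"
    using assms(4) unfolding q_def by (auto intro!: tendsto_eq_intros)
  moreover have q_pos: "\<forall>\<^sub>F z in at y within ball x r. q z > 0"
    by (auto simp: q_def eventually_at_filter dist_norm norm_minus_commute power_strict_mono)
  ultimately have "LIM z at y within ball x r. inverse (q z / r) :> at_top"
    using \<open>r > 0\<close> by (intro filterlim_inverse_at_top) (auto intro!: tendsto_eq_intros elim: eventually_mono)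
  then have "((\<lambda>z. inverse (q z / r) powr (- k)) \<longlongrightarrow> 0) (at y within ball x r)"
    using \<open>k > 0\<close> by (intro tendsto_neg_powr) auto
  then have "LIM z at y within ball x r. inverse (inverse (q z / r) powr (- k)) :> at_top"
    using q_pos \<open>r > 0\<close> by (intro filterlim_inverse_at_top) (auto elim: eventually_mono)
  then have "LIM z at y within ball x r. \<alpha> * inverse (inverse (q z / r) powr (- k)) :> at_top"
    using \<open>\<alpha> > 0\<close> by (intro filterlim_tendsto_pos_mult_at_top[OF tendsto_const])
  then show ?thesis
    unfolding u_in_def k_def[symmetric] by (simp add: q_def powr_minus inverse_divide)
qed

text \<open>Since \<open>u_in\<close> blows up at the sphere, the quotient extended by \<open>0\<close> there stays upper
  semicontinuous on the closed ball.\<close>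

lemma usc_on_quotient_u_in:
  fixes x :: "real^'n" and v :: "real^'n \<Rightarrow> real"
  assumes "CARD('n) \<ge> 3" "r > 0" "\<alpha> > 0" and v: "usc_on (cball x r) v"
    and "\<And>z. z \<in> cball x r \<Longrightarrow> 0 < v z" "\<And>z. z \<in> cball x r \<Longrightarrow> v z \<le> M"
  shows "usc_on (cball x r) (\<lambda>y. if y \<in> ball x r then v y / u_in \<alpha> r x y else 0)"
  unfolding usc_on_iff_eventually
proof (intro ballI allI impI)
  let ?u = "u_in \<alpha> r x"
  fix y c
  assume y: "y \<in> cball x r" and less: "(if y \<in> ball x r then v y / ?u y else 0) < c"
  show "\<forall>\<^sub>F z in at y within cball x r. (if z \<in> ball x r then v z / ?u z else 0) < c"
  proof (cases "y \<in> ball x r")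
    case True
    have "?u y > 0" "v y > 0" using True y assms u_in_pos by auto
    with less True have "c > 0" "v y < c * ?u y"
      by (auto simp: divide_less_eq mult.commute intro: divide_pos_pos less_trans)
    have "isCont ?u y"
      using continuous_on_u_in True by (metis continuous_on_eq_continuous_at open_ball)
    then have "((\<lambda>z. c * ?u z) \<longlongrightarrow> c * ?u y) (at y within cball x r)"
      by (intro tendsto_mult_left) (simp add: continuous_at_imp_continuous_within continuous_within[symmetric])
    then have "\<forall>\<^sub>F z in at y within cball x r. v z < c * ?u z"
      using usc_on_eventually_less[OF v y] \<open>v y < c * ?u y\<close> by blast
    moreover have "\<forall>\<^sub>F z in at y within cball x r. z \<in> ball x r"
      using eventually_nhds_in_open[OF open_ball True]
      by (auto simp: eventually_at_filter elim: eventually_mono)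
    ultimately show ?thesis
    proof eventually_elim
      case (elim z)
      then have "?u z > 0" using u_in_pos assms(2,3) by blast
      then show ?case using elim by (simp add: divide_less_eq mult.commute)
    qed
  next
    case False
    then have "c > 0" "norm (y - x) = r" using less y by (auto simp: dist_norm norm_minus_commute)
    then have "\<forall>\<^sub>F z in at y within ball x r. M / c < ?u z"
      using u_in_tendsto_at_top_sphere[OF assms(1-3)] unfolding filterlim_at_top_dense by blast
    then have "\<forall>\<^sub>F z in at y within cball x r. z \<in> ball x r \<longrightarrow> M / c < ?u z"
      by (auto simp: eventually_at_filter elim: eventually_mono)
    then show ?thesis
    proof eventually_elim
      case (elim z)
      show ?case
      proof (cases "z \<in> ball x r")
        case True
        then have "M < c * ?u z" using elim \<open>c > 0\<close> by (simp add: divide_less_eq mult.commute)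
        moreover have "v z \<le> M" using assms(6) True by auto
        ultimately have "v z < c * ?u z" by linarith
        moreover have "?u z > 0" using u_in_pos assms(2,3) True by blast
        ultimately show ?thesis using True by (simp add: divide_less_eq mult.commute)
      qed (use \<open>c > 0\<close> in simp)
    qed
  qed
qed

section \<open>Comparison with the canonical solutions\<close>

lemma visc_subsolD:
  assumes "visc_subsol f G \<Omega> v" "x0 \<in> \<Omega>" "C2_with \<Omega> \<phi> D\<phi> H\<phi>" "v x0 = \<phi> x0"
    and "\<rho> > 0" "\<And>y. y \<in> \<Omega> \<Longrightarrow> dist y x0 < \<rho> \<Longrightarrow> v y \<le> \<phi> y"
    and "eigvec_of (- conf_hess (\<phi> x0) (D\<phi> x0) (H\<phi> x0)) lam"
  shows "lam \<in> closure G" "1 \<le> f lam"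
  using assms unfolding visc_subsol_def by blast+

lemma canonical_touching_factor_le_one:
  fixes f :: "real^'n \<Rightarrow> real" and v :: "real^'n \<Rightarrow> real"
  assumes n3: "CARD('n) \<ge> 3" and st: "structural f G" and cc: "canonical_const f G \<alpha>"
    and sub: "visc_subsol f G \<Omega> v" and "r > 0" "ball x r \<subseteq> \<Omega>" "y0 \<in> ball x r" "m > 0"
    and touch: "v y0 = m * u_in \<alpha> r x y0" and below: "\<And>y. y \<in> ball x r \<Longrightarrow> v y \<le> m * u_in \<alpha> r x y"
  shows "m \<le> 1"
proof -
  define e where "e = - 4 / (real CARD('n) - 2)"
  have "e < 0" using n3 by (simp add: e_def)
  have "\<alpha> > 0" using cc unfolding canonical_const_def by auto
  define t1 where "t1 = (norm (y0 - x)^2 + r^2) / 2"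
  have "norm (y0 - x) < r" using \<open>y0 \<in> ball x r\<close> by (simp add: dist_norm norm_minus_commute)
  then have "norm (y0 - x)^2 < t1" "t1 < r^2"
    unfolding t1_def using power_strict_mono[of "norm (y0 - x)" r 2] by auto
  obtain \<phi> D\<phi> H\<phi> where "C2_with UNIV \<phi> D\<phi> H\<phi>"
    and \<phi>: "\<And>y. norm (y - x)^2 < t1 \<Longrightarrow> \<phi> y = m * u_in \<alpha> r x y"
    and \<phi>_hess: "\<And>y. norm (y - x)^2 < t1 \<Longrightarrow> conf_hess (\<phi> y) (D\<phi> y) (H\<phi> y)
        = (- 2 * (m * \<alpha>) powr e) *\<^sub>R mat 1"
    using canonical_profile_C2_extension[OF n3 \<open>r > 0\<close> \<open>m > 0\<close> \<open>\<alpha> > 0\<close> \<open>t1 < r^2\<close>, of x]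
    unfolding e_def by blast
  have "open {y. norm (y - x)^2 < t1}" by (intro open_Collect_less continuous_intros)
  then obtain \<rho> where "\<rho> > 0" and \<rho>: "ball y0 \<rho> \<subseteq> {y. norm (y - x)^2 < t1}"
    using \<open>norm (y0 - x)^2 < t1\<close> openE by blast
  have near: "v y \<le> \<phi> y" if "y \<in> \<Omega>" "dist y y0 < \<rho>" for y
  proof -
    have "norm (y - x)^2 < t1" using \<rho> that(2) by (auto simp: dist_commute)
    moreover from this have "norm (y - x) < r"
      using \<open>t1 < r^2\<close> \<open>r > 0\<close> power2_less_imp_less[of "norm (y - x)" r] by simp
    then have "y \<in> ball x r" by (simp add: dist_norm norm_minus_commute)
    ultimately show ?thesis using below \<phi> by simp
  qed
  have "v y0 = \<phi> y0" using touch \<phi> \<open>norm (y0 - x)^2 < t1\<close> by simp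
  have "y0 \<in> \<Omega>" using assms(6,7) by auto
  have "C2_with \<Omega> \<phi> D\<phi> H\<phi>" using \<open>C2_with UNIV \<phi> D\<phi> H\<phi>\<close> by (rule C2_with_subset) simp
  have "eigvec_of (- conf_hess (\<phi> y0) (D\<phi> y0) (H\<phi> y0)) (vec (2 * (m * \<alpha>) powr e))"
    using \<phi>_hess \<open>norm (y0 - x)^2 < t1\<close> eigvec_of_mat by (simp add: scaleR_mat_1 uminus_mat)
  from visc_subsolD(2)[OF sub \<open>y0 \<in> \<Omega>\<close> \<open>C2_with \<Omega> \<phi> D\<phi> H\<phi>\<close> \<open>v y0 = \<phi> y0\<close> \<open>\<rho> > 0\<close> near this]
  have "1 \<le> f (vec (2 * (m * \<alpha>) powr e))" .
  also have "vec (2 * (m * \<alpha>) powr e) = m powr e *\<^sub>R vec (2 * \<alpha> powr e)"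
    using \<open>m > 0\<close> \<open>\<alpha> > 0\<close> by (simp add: vec_eq_iff powr_mult)
  finally have "1 \<le> f (m powr e *\<^sub>R vec (2 * \<alpha> powr e))" .
  with canonical_const_eigenvalue[OF n3 st cc, folded e_def] have "1 \<le> m powr e"
    using structural_scale_ge_one[OF st] \<open>m > 0\<close> by simp
  then show "m \<le> 1"
    using \<open>e < 0\<close> powr_less_one[of m e] by (meson not_le order.strict_iff_not)
qed

lemma visc_subsol_le_u_in_center:
  fixes f :: "real^'n \<Rightarrow> real" and v :: "real^'n \<Rightarrow> real"
  assumes n3: "CARD('n) \<ge> 3" and st: "structural f G" and cc: "canonical_const f G \<alpha>"
    and pos: "\<forall>y\<in>\<Omega>. v y > 0" and sub: "visc_subsol f G \<Omega> v"
    and "r > 0" and "cball x r \<subseteq> \<Omega>"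
  shows "v x \<le> u_in \<alpha> r x x"
proof -
  let ?u = "u_in \<alpha> r x"
  have "\<alpha> > 0" using cc unfolding canonical_const_def by auto
  have "x \<in> ball x r" "cball x r \<noteq> {}" using \<open>r > 0\<close> by auto
  have u_pos: "?u y > 0" if "y \<in> ball x r" for y
    using u_in_pos[OF \<open>r > 0\<close> \<open>\<alpha> > 0\<close> that] .
  have v_pos: "v y > 0" if "y \<in> cball x r" for y
    using pos \<open>cball x r \<subseteq> \<Omega>\<close> that by auto
  have "usc_on \<Omega> v" using sub unfolding visc_subsol_def by blast
  then have usc: "usc_on (cball x r) v" using \<open>cball x r \<subseteq> \<Omega>\<close> by (rule usc_on_subset)
  obtain yM where "yM \<in> cball x r" and vM: "\<And>z. z \<in> cball x r \<Longrightarrow> v z \<le> v yM"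
    using usc_on_attains_max[OF compact_cball \<open>cball x r \<noteq> {}\<close> usc] by blast
  define h where "h y = (if y \<in> ball x r then v y / ?u y else 0)" for y
  have "usc_on (cball x r) h"
    unfolding h_def by (rule usc_on_quotient_u_in[OF n3 \<open>r > 0\<close> \<open>\<alpha> > 0\<close> usc v_pos vM])
  then obtain y0 where "y0 \<in> cball x r" and max: "\<And>z. z \<in> cball x r \<Longrightarrow> h z \<le> h y0"
    using usc_on_attains_max[OF compact_cball \<open>cball x r \<noteq> {}\<close>] by blast
  have "h x > 0" using v_pos u_pos \<open>x \<in> ball x r\<close> by (simp add: h_def)
  then have "h y0 > 0" using max[of x] \<open>x \<in> ball x r\<close> by fastforce
  then have "y0 \<in> ball x r" by (auto simp: h_def split: if_splits)
  have below: "v y \<le> h y0 * ?u y" if "y \<in> ball x r" for y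
  proof -
    have "v y / ?u y \<le> h y0" using max[of y] that by (simp add: h_def)
    then show ?thesis using u_pos[OF that] by (simp add: divide_le_eq mult.commute)
  qed
  have "v y0 = h y0 * ?u y0"
    using u_pos[OF \<open>y0 \<in> ball x r\<close>] \<open>y0 \<in> ball x r\<close> by (simp add: h_def)
  moreover have "ball x r \<subseteq> \<Omega>" using \<open>cball x r \<subseteq> \<Omega>\<close> ball_subset_cball by blast
  ultimately have "h y0 \<le> 1"
    using canonical_touching_factor_le_one[OF n3 st cc sub \<open>r > 0\<close> _ \<open>y0 \<in> ball x r\<close> \<open>h y0 > 0\<close> _ below]
    by blast
  have "v x \<le> h y0 * ?u x" by (rule below[OF \<open>x \<in> ball x r\<close>])
  also have "\<dots> \<le> ?u x"
    using \<open>h y0 \<le> 1\<close> u_pos[OF \<open>x \<in> ball x r\<close>] by (simp add: mult_le_cancel_right1)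
  finally show ?thesis .
qed

lemma visc_subsol_radius_bound:
  fixes f :: "real^'n \<Rightarrow> real" and v :: "real^'n \<Rightarrow> real"
  assumes "CARD('n) \<ge> 3" "structural f G" "canonical_const f G \<alpha>"
    and "\<forall>y\<in>\<Omega>. v y > 0" "visc_subsol f G \<Omega> v" and "r > 0" "cball x r \<subseteq> \<Omega>"
  shows "r powr ((real CARD('n) - 2) / 2) * v x \<le> \<alpha>"
proof -
  have "v x \<le> u_in \<alpha> r x x" by (rule visc_subsol_le_u_in_center[OF assms])
  also have "u_in \<alpha> r x x = \<alpha> / r powr ((real CARD('n) - 2) / 2)"
    using \<open>r > 0\<close> by (simp add: u_in_def power2_eq_square powr_divide)
  finally show ?thesis
    using \<open>r > 0\<close> by (simp add: field_simps)
qed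

lemma cball_subset_lt_infdist_frontier:
  fixes x :: "'a::euclidean_space"
  assumes "x \<in> S" "r < infdist x (frontier S)"
  shows "cball x r \<subseteq> S"
proof
  fix y assume y: "y \<in> cball x r"
  show "y \<in> S"
  proof (rule ccontr)
    assume "y \<notin> S"
    then obtain w where "w \<in> closed_segment x y" "w \<in> frontier S"
      using connected_Int_frontier[of "closed_segment x y" S] assms(1) by auto
    then have "infdist x (frontier S) \<le> dist x y"
      using infdist_le[of w "frontier S" x] dist_in_closed_segment[of w x y] by (simp add: dist_commute)
    then show False using y assms(2) by simp
  qed
qed

lemma powr_mult_le_of_forall_less:
  fixes a b d k :: real
  assumes "0 \<le> d" "0 < k" "0 \<le> a" and le: "\<And>r. 0 < r \<Longrightarrow> r < d \<Longrightarrow> r powr k * b \<le> a"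
  shows "d powr k * b \<le> a"
proof (cases "d = 0")
  case True
  then show ?thesis using \<open>0 \<le> a\<close> by simp
next
  case False
  then have "d > 0" using \<open>0 \<le> d\<close> by simp
  then have "((\<lambda>r. r powr k * b) \<longlongrightarrow> d powr k * b) (at_left d)"
    by (auto intro!: tendsto_intros)
  moreover have "\<forall>\<^sub>F r in at_left d. r powr k * b \<le> a"
    using \<open>d > 0\<close> le by (auto simp: eventually_at_left intro!: exI[of _ 0])
  ultimately show ?thesis
    by (rule tendsto_upperbound[OF _ _ trivial_limit_at_left_real])
qed

lemma ex_powr_mult_gt:
  fixes a b k :: real
  assumes "0 < k" "0 < b"
  obtains r where "0 < r" "a < r powr k * b"
proof
  let ?r = "((\<bar>a\<bar> + 1) / b) powr (1 / k)"
  show "0 < ?r" using assms by simp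
  have "?r powr k * b = \<bar>a\<bar> + 1" using assms by (simp add: powr_powr)
  then show "a < ?r powr k * b" by simp
qed

theorem lemma3p1:
  fixes f :: "real^'n \<Rightarrow> real" and G :: "(real^'n) set"
    and \<Omega> :: "(real^'n) set" and v :: "real^'n \<Rightarrow> real" and \<alpha> :: real
  assumes "CARD('n) \<ge> 3"
    and "structural f G"
    and "canonical_const f G \<alpha>"
    and "open \<Omega>" and "connected \<Omega>" and "\<Omega> \<noteq> {}"
    and "\<forall>x\<in>\<Omega>. v x > 0"
    and "visc_subsol f G \<Omega> v"
  shows "\<Omega> \<noteq> UNIV \<and>
    (\<forall>x\<in>\<Omega>. infdist x (frontier \<Omega>) powr ((real CARD('n) - 2) / 2) * v x \<le> \<alpha>)"
proof
  define k where "k = (real CARD('n) - 2) / 2"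
  have "k > 0" using assms(1) by (simp add: k_def)
  have "\<alpha> > 0" using assms(3) by (simp add: canonical_const_def)
  note bound = visc_subsol_radius_bound[OF assms(1-3,7,8), folded k_def]
  show "\<Omega> \<noteq> UNIV"
  proof
    assume "\<Omega> = UNIV"
    obtain x where "x \<in> \<Omega>" using assms(6) by auto
    then obtain r where "0 < r" "\<alpha> < r powr k * v x"
      using ex_powr_mult_gt[OF \<open>k > 0\<close>] assms(7) by metis
    then show False using bound[of r x] \<open>\<Omega> = UNIV\<close> by simp
  qed
  show "\<forall>x\<in>\<Omega>. infdist x (frontier \<Omega>) powr k * v x \<le> \<alpha>"
  proof
    fix x assume "x \<in> \<Omega>"
    show "infdist x (frontier \<Omega>) powr k * v x \<le> \<alpha>"
      by (rule powr_mult_le_of_forall_less[OF infdist_nonneg \<open>k > 0\<close> less_imp_le[OF \<open>\<alpha> > 0\<close>]])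
        (use bound cball_subset_lt_infdist_frontier[OF \<open>x \<in> \<Omega>\<close>] in blast)
  qed
qed

end
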